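(* Let $X$ be a topological space and $I$ a $Z_B$-ideal of $B_1(X)$. The following are equivalent: (1) $I$ is a prime ideal of $B_1(X)$; (2) $I$ contains a prime ideal of $B_1(X)$; (3) for all $f,g\in B_1(X)$, if $fg=0$ then $f\in I$ or $g\in I$; (4) for every $f\in B_1(X)$ there exists $Z\in Z_B[I]$ such that $f$ does not change sign on $Z$ (i.e. $f\ge 0$ on $Z$ or $f\le0$ on $Z$).
   Context: For a topological space $X$, $B_1(X)$ denotes the commutative ring (with pointwise operations) of all Baire one functions $f:X\to\mathbb{R}$, i.e. pointwise limits of sequences of continuous real-valued functions on $X$. For $f\in B_1(X)$, $Z(f)=\{x\in X: f(x)=0\}$. For an ideal $I$, $Z_B[I]=\{Z(f):f\in I\}$. All ideals are proper. An ideal $I$ of $B_1(X)$ is a $Z_B$-ideal if for all $f\in B_1(X)$: $f\in I \iff Z(f)\in Z_B[I]$. *)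

theory Defs
  imports "HOL-Analysis.Analysis" "HOL-Algebra.Ideal"
begin

text \<open>Baire one functions on a topological space X (given as an abstract topology).
  Functions are represented extensionally: they vanish outside topspace X.\<close>
definition baire_one :: "'a topology \<Rightarrow> ('a \<Rightarrow> real) set" where
  "baire_one X = {f. (\<forall>x. x \<notin> topspace X \<longrightarrow> f x = 0) \<and>
     (\<exists>fs::nat \<Rightarrow> 'a \<Rightarrow> real. (\<forall>n. continuous_map X euclideanreal (fs n)) \<and>
        (\<forall>x\<in>topspace X. (\<lambda>n. fs n x) \<longlonglongrightarrow> f x))}"

definition B1_ring :: "'a topology \<Rightarrow> ('a \<Rightarrow> real) ring" where
  "B1_ring X = \<lparr>carrier = baire_one X,
     monoid.mult = (\<lambda>f g x. f x * g x),
     one = (\<lambda>x. if x \<in> topspace X then 1 else 0),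
     zero = (\<lambda>x. 0),
     add = (\<lambda>f g x. f x + g x)\<rparr>"

definition zero_set :: "'a topology \<Rightarrow> ('a \<Rightarrow> real) \<Rightarrow> 'a set" where
  "zero_set X f = {x \<in> topspace X. f x = 0}"

definition ZB :: "'a topology \<Rightarrow> ('a \<Rightarrow> real) set \<Rightarrow> 'a set set" where
  "ZB X I = zero_set X ` I"

definition ZB_ideal :: "'a topology \<Rightarrow> ('a \<Rightarrow> real) set \<Rightarrow> bool" where
  "ZB_ideal X I \<longleftrightarrow> ideal I (B1_ring X) \<and> I \<noteq> carrier (B1_ring X) \<and>
     (\<forall>f \<in> baire_one X. f \<in> I \<longleftrightarrow> zero_set X f \<in> ZB X I)"

end

theory Submission
  imports Defs
begin

text \<open>A product \<open>g h\<close> lying in \<open>I\<close> is split by the sign of \<open>g\<^sup>2 - h\<^sup>2\<close>: on a zero set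
  \<open>Z \<in> Z\<^sub>B[I]\<close> where it is, say, nonnegative, every common zero of \<open>Z\<close> and \<open>g h\<close> is a zero
  of \<open>h\<close>. Since \<open>Z\<^sub>B[I]\<close> is closed under finite intersections (via \<open>k\<^sup>2 + (g h)\<^sup>2\<close>) and a
  \<open>Z\<^sub>B\<close>-ideal contains every function whose zero set contains a member of \<open>Z\<^sub>B[I]\<close>, this
  puts \<open>h\<close> in \<open>I\<close>. Conversely, applying primality to the zero product
  \<open>max f 0 \<cdot> min f 0\<close> yields a member of \<open>Z\<^sub>B[I]\<close> on which \<open>f\<close> has constant sign.\<close>

lemma baire_oneI:
  assumes "\<And>n. continuous_map X euclideanreal (fs n)"
    and "\<And>x. x \<in> topspace X \<Longrightarrow> (\<lambda>n. fs n x) \<longlonglongrightarrow> f x"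
    and "\<And>x. x \<notin> topspace X \<Longrightarrow> f x = 0"
  shows "f \<in> baire_one X"
  using assms unfolding baire_one_def by blast

lemma baire_oneE:
  assumes "f \<in> baire_one X"
  obtains fs where "\<And>n. continuous_map X euclideanreal (fs n)"
    and "\<And>x. x \<in> topspace X \<Longrightarrow> (\<lambda>n. fs n x) \<longlonglongrightarrow> f x"
    and "\<And>x. x \<notin> topspace X \<Longrightarrow> f x = 0"
  using assms unfolding baire_one_def by blast

lemma baire_one_compose:
  assumes "f \<in> baire_one X" and "continuous_on UNIV \<phi>" and "\<phi> 0 = 0"
  shows "(\<lambda>x. \<phi> (f x)) \<in> baire_one X"
proof -
  obtain fs where cont: "\<And>n. continuous_map X euclideanreal (fs n)"
    and lim: "\<And>x. x \<in> topspace X \<Longrightarrow> (\<lambda>n. fs n x) \<longlonglongrightarrow> f x"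
    and out: "\<And>x. x \<notin> topspace X \<Longrightarrow> f x = 0"
    using baire_oneE[OF assms(1)] by blast
  show ?thesis
  proof (rule baire_oneI)
    show "continuous_map X euclideanreal (\<lambda>x. \<phi> (fs n x))" for n
      using continuous_map_compose[OF cont, of euclideanreal \<phi>] assms(2)
      by (simp add: o_def continuous_map_iff_continuous)
    show "(\<lambda>n. \<phi> (fs n x)) \<longlonglongrightarrow> \<phi> (f x)" if "x \<in> topspace X" for x
      using continuous_on_tendsto_compose[OF assms(2) lim[OF that]] by simp
  qed (simp add: out assms(3))
qed

lemma baire_one_uminus: "f \<in> baire_one X \<Longrightarrow> (\<lambda>x. - f x) \<in> baire_one X"
  by (rule baire_one_compose) (auto intro: continuous_intros)

lemma baire_one_add:
  assumes "f \<in> baire_one X" and "g \<in> baire_one X"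
  shows "(\<lambda>x. f x + g x) \<in> baire_one X"
proof -
  obtain fs where "\<And>n. continuous_map X euclideanreal (fs n)"
    "\<And>x. x \<in> topspace X \<Longrightarrow> (\<lambda>n. fs n x) \<longlonglongrightarrow> f x" "\<And>x. x \<notin> topspace X \<Longrightarrow> f x = 0"
    using baire_oneE[OF assms(1)] by blast
  moreover obtain gs where "\<And>n. continuous_map X euclideanreal (gs n)"
    "\<And>x. x \<in> topspace X \<Longrightarrow> (\<lambda>n. gs n x) \<longlonglongrightarrow> g x" "\<And>x. x \<notin> topspace X \<Longrightarrow> g x = 0"
    using baire_oneE[OF assms(2)] by blast
  ultimately show ?thesis
    by (intro baire_oneI[of X "\<lambda>n x. fs n x + gs n x"]) (simp_all add: continuous_map_add tendsto_add)
qed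

lemma baire_one_mult:
  assumes "f \<in> baire_one X" and "g \<in> baire_one X"
  shows "(\<lambda>x. f x * g x) \<in> baire_one X"
proof -
  obtain fs where "\<And>n. continuous_map X euclideanreal (fs n)"
    "\<And>x. x \<in> topspace X \<Longrightarrow> (\<lambda>n. fs n x) \<longlonglongrightarrow> f x" "\<And>x. x \<notin> topspace X \<Longrightarrow> f x = 0"
    using baire_oneE[OF assms(1)] by blast
  moreover obtain gs where "\<And>n. continuous_map X euclideanreal (gs n)"
    "\<And>x. x \<in> topspace X \<Longrightarrow> (\<lambda>n. gs n x) \<longlonglongrightarrow> g x" "\<And>x. x \<notin> topspace X \<Longrightarrow> g x = 0"
    using baire_oneE[OF assms(2)] by blast
  ultimately show ?thesis
    by (intro baire_oneI[of X "\<lambda>n x. fs n x * gs n x"]) (simp_all add: continuous_map_real_mult tendsto_mult)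
qed

lemma baire_one_diff:
  assumes "f \<in> baire_one X" and "g \<in> baire_one X"
  shows "(\<lambda>x. f x - g x) \<in> baire_one X"
  using baire_one_add[OF assms(1) baire_one_uminus[OF assms(2)]] by simp

lemma indicator_topspace_baire_one: "(\<lambda>x. if x \<in> topspace X then 1 else 0) \<in> baire_one X"
  by (rule baire_oneI[of X "\<lambda>n x. 1"]) simp_all

lemma B1_ring_simps [simp]:
  "carrier (B1_ring X) = baire_one X"
  "f \<otimes>\<^bsub>B1_ring X\<^esub> g = (\<lambda>x. f x * g x)"
  "f \<oplus>\<^bsub>B1_ring X\<^esub> g = (\<lambda>x. f x + g x)"
  "\<zero>\<^bsub>B1_ring X\<^esub> = (\<lambda>x. 0)"
  "\<one>\<^bsub>B1_ring X\<^esub> = (\<lambda>x. if x \<in> topspace X then 1 else 0)"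
  by (simp_all add: B1_ring_def)

lemma cring_B1_ring: "cring (B1_ring X)"
proof (rule cringI)
  show "abelian_group (B1_ring X)"
  proof (rule abelian_groupI)
    fix f assume "f \<in> carrier (B1_ring X)"
    then have "(\<lambda>x. - f x) \<in> carrier (B1_ring X)"
      by (simp add: baire_one_uminus)
    then show "\<exists>g \<in> carrier (B1_ring X). g \<oplus>\<^bsub>B1_ring X\<^esub> f = \<zero>\<^bsub>B1_ring X\<^esub>"
      by force
  qed (auto simp: baire_one_add intro: baire_oneI[of X "\<lambda>n x. 0"])
  show "comm_monoid (B1_ring X)"
  proof (rule comm_monoidI)
    fix f assume "f \<in> carrier (B1_ring X)"
    then show "\<one>\<^bsub>B1_ring X\<^esub> \<otimes>\<^bsub>B1_ring X\<^esub> f = f"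
      by (auto simp: baire_one_def)
  qed (auto simp: baire_one_mult indicator_topspace_baire_one mult.commute)
qed (simp add: distrib_right)

lemma primeideal_subset_zero_divisor_mem:
  assumes "primeideal P R" and "P \<subseteq> I"
    and "a \<in> carrier R" and "b \<in> carrier R" and "a \<otimes>\<^bsub>R\<^esub> b = \<zero>\<^bsub>R\<^esub>"
  shows "a \<in> I \<or> b \<in> I"
proof -
  interpret primeideal P R by fact
  have "a \<otimes>\<^bsub>R\<^esub> b \<in> P" using assms(5) by simp
  then show ?thesis using I_prime assms(2-4) by blast
qed

lemma ideal_B1_mult_closed:
  assumes "ideal I (B1_ring X)" and "a \<in> I" and "h \<in> baire_one X"
  shows "(\<lambda>x. h x * a x) \<in> I"
  using ideal.I_l_closed[OF assms(1)] assms(2,3) by simp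

lemma ideal_B1_zero_set_Int:
  assumes "ideal I (B1_ring X)" and "a \<in> I" and "b \<in> I"
  shows "\<exists>c \<in> I. zero_set X c = zero_set X a \<inter> zero_set X b"
proof
  have "a \<in> baire_one X" "b \<in> baire_one X"
    using assms ideal.Icarr by fastforce+
  then have "(\<lambda>x. a x * a x) \<in> I" "(\<lambda>x. b x * b x) \<in> I"
    using ideal_B1_mult_closed[OF assms(1)] assms(2,3) by blast+
  then show "(\<lambda>x. a x * a x + b x * b x) \<in> I"
    using additive_subgroup.a_closed[OF ideal.axioms(1)[OF assms(1)]] by force
  show "zero_set X (\<lambda>x. a x * a x + b x * b x) = zero_set X a \<inter> zero_set X b"
    by (auto simp: zero_set_def add_nonneg_eq_0_iff)
qed

lemma ZB_ideal_mem_if_zero_set_subset: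
  assumes "ZB_ideal X I" and "a \<in> I" and "h \<in> baire_one X"
    and "zero_set X a \<subseteq> zero_set X h"
  shows "h \<in> I"
proof -
  have "(\<lambda>x. h x * a x) \<in> I"
    using assms(1) ideal_B1_mult_closed[OF _ assms(2,3)] unfolding ZB_ideal_def by blast
  moreover have "zero_set X (\<lambda>x. h x * a x) = zero_set X h"
    using assms(4) by (auto simp: zero_set_def)
  ultimately have "zero_set X h \<in> ZB X I"
    unfolding ZB_def by (metis image_eqI)
  then show ?thesis
    using assms(1,3) unfolding ZB_ideal_def by blast
qed

lemma ZB_sign_constant_if_zero_product_mem:
  assumes "\<forall>f \<in> baire_one X. \<forall>g \<in> baire_one X.
      f \<otimes>\<^bsub>B1_ring X\<^esub> g = \<zero>\<^bsub>B1_ring X\<^esub> \<longrightarrow> f \<in> I \<or> g \<in> I"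
    and "f \<in> baire_one X"
  shows "\<exists>Z \<in> ZB X I. (\<forall>x \<in> Z. f x \<ge> 0) \<or> (\<forall>x \<in> Z. f x \<le> 0)"
proof -
  let ?pos = "\<lambda>x. max (f x) 0" and ?neg = "\<lambda>x. min (f x) 0"
  have "?pos \<in> baire_one X" "?neg \<in> baire_one X"
    by (intro baire_one_compose[OF assms(2)] continuous_intros; simp)+
  moreover have "(\<lambda>x. ?pos x * ?neg x) = (\<lambda>x. 0)"
    by (auto simp: max_def min_def)
  ultimately have "?pos \<in> I \<or> ?neg \<in> I"
    using assms(1) by auto
  moreover have "\<forall>x \<in> zero_set X ?pos. f x \<le> 0" "\<forall>x \<in> zero_set X ?neg. f x \<ge> 0"
    by (auto simp: zero_set_def max_def min_def split: if_splits)
  ultimately show ?thesis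
    unfolding ZB_def by blast
qed

lemma eq_0_if_mult_eq_0_square_le:
  fixes a b :: "'a :: linordered_idom"
  assumes "a * b = 0" and "a * a \<le> b * b"
  shows "a = 0"
proof (cases "b = 0")
  case True
  then have "a * a \<le> 0" using assms(2) by simp
  then show ?thesis by (auto simp: mult_le_0_iff)
next
  case False
  then show ?thesis using assms(1) by simp
qed

lemma primeideal_if_ZB_sign_constant:
  assumes ZB: "ZB_ideal X I"
    and sign: "\<forall>f \<in> baire_one X. \<exists>Z \<in> ZB X I. (\<forall>x \<in> Z. f x \<ge> 0) \<or> (\<forall>x \<in> Z. f x \<le> 0)"
  shows "primeideal I (B1_ring X)"
proof -
  have ideal: "ideal I (B1_ring X)" and proper: "carrier (B1_ring X) \<noteq> I"
    using ZB unfolding ZB_ideal_def by auto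
  show ?thesis
  proof (rule primeidealI[OF ideal cring_B1_ring proper])
    fix g h assume "g \<in> carrier (B1_ring X)" "h \<in> carrier (B1_ring X)"
      and "g \<otimes>\<^bsub>B1_ring X\<^esub> h \<in> I"
    then have g: "g \<in> baire_one X" and h: "h \<in> baire_one X" and gh: "(\<lambda>x. g x * h x) \<in> I"
      by simp_all
    have "(\<lambda>x. g x * g x - h x * h x) \<in> baire_one X"
      using g h by (intro baire_one_diff baire_one_mult)
    then obtain Z where "Z \<in> ZB X I"
      and Z_sign: "(\<forall>x \<in> Z. g x * g x - h x * h x \<ge> 0) \<or> (\<forall>x \<in> Z. g x * g x - h x * h x \<le> 0)"
      using bspec[OF sign] by blast
    then obtain k where "k \<in> I" and Z: "Z = zero_set X k"
      unfolding ZB_def by blast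
    obtain c where "c \<in> I" and c: "zero_set X c = Z \<inter> zero_set X (\<lambda>x. g x * h x)"
      using ideal_B1_zero_set_Int[OF ideal \<open>k \<in> I\<close> gh] Z by blast
    from Z_sign show "g \<in> I \<or> h \<in> I"
    proof
      assume "\<forall>x \<in> Z. g x * g x - h x * h x \<ge> 0"
      then have "zero_set X c \<subseteq> zero_set X h"
        unfolding c using eq_0_if_mult_eq_0_square_le[of "h x" "g x" for x]
        by (auto simp: zero_set_def mult.commute)
      then show ?thesis
        using ZB_ideal_mem_if_zero_set_subset[OF ZB \<open>c \<in> I\<close> h] by blast
    next
      assume "\<forall>x \<in> Z. g x * g x - h x * h x \<le> 0"
      then have "zero_set X c \<subseteq> zero_set X g"
        unfolding c using eq_0_if_mult_eq_0_square_le[of "g x" "h x" for x]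
        by (auto simp: zero_set_def)
      then show ?thesis
        using ZB_ideal_mem_if_zero_set_subset[OF ZB \<open>c \<in> I\<close> g] by blast
    qed
  qed
qed

theorem theorem2p16:
  fixes X :: "'a topology" and I :: "('a \<Rightarrow> real) set"
  assumes "ZB_ideal X I"
  shows "(primeideal I (B1_ring X) \<longleftrightarrow>
            (\<exists>P. primeideal P (B1_ring X) \<and> P \<subseteq> I))
       \<and> (primeideal I (B1_ring X) \<longleftrightarrow>
            (\<forall>f \<in> baire_one X. \<forall>g \<in> baire_one X.
               f \<otimes>\<^bsub>B1_ring X\<^esub> g = \<zero>\<^bsub>B1_ring X\<^esub> \<longrightarrow> f \<in> I \<or> g \<in> I))
       \<and> (primeideal I (B1_ring X) \<longleftrightarrow>
            (\<forall>f \<in> baire_one X. \<exists>Z \<in> ZB X I.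
               (\<forall>x \<in> Z. f x \<ge> 0) \<or> (\<forall>x \<in> Z. f x \<le> 0)))"
proof -
  let ?prime = "primeideal I (B1_ring X)"
    and ?contains_prime = "\<exists>P. primeideal P (B1_ring X) \<and> P \<subseteq> I"
    and ?zero_product = "\<forall>f \<in> baire_one X. \<forall>g \<in> baire_one X.
      f \<otimes>\<^bsub>B1_ring X\<^esub> g = \<zero>\<^bsub>B1_ring X\<^esub> \<longrightarrow> f \<in> I \<or> g \<in> I"
    and ?sign = "\<forall>f \<in> baire_one X. \<exists>Z \<in> ZB X I. (\<forall>x \<in> Z. f x \<ge> 0) \<or> (\<forall>x \<in> Z. f x \<le> 0)"
  have "?prime \<Longrightarrow> ?contains_prime" by blast
  moreover have "?contains_prime \<Longrightarrow> ?zero_product"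
    by (metis B1_ring_simps(1) primeideal_subset_zero_divisor_mem)
  moreover have "?zero_product \<Longrightarrow> ?sign"
    using ZB_sign_constant_if_zero_product_mem by blast
  moreover have "?sign \<Longrightarrow> ?prime"
    using primeideal_if_ZB_sign_constant[OF assms] by blast
  ultimately show ?thesis by blast
qed

end
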